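(* Let $C\subseteq\mathbb{R}^p$ be a closed convex set with $0\in\mathrm{relint}(C)$, let $\mathcal{K}=C^\circ$, let $X\in\mathbb{R}^{n\times p}$ and $y\in\mathbb{R}^n$, and let $f_\eta=\eta^TX^T(I-P_{XC^\perp})y$ for $\eta\in\mathcal{K}$. Then $\sup_{\eta\in\mathcal{K}}f_\eta\le M$ for some constant $M<\infty$.
   Context: $C^\circ=\{v: v^Tu\le1\text{ for all }u\in C\}$ is the polar set; $C^\perp=\{v: v\perp C\}$; $P_{XC^\perp}$ is the orthogonal projection of $\mathbb{R}^n$ onto the subspace $XC^\perp=\{Xv: v\in C^\perp\}$. *)

theory Defs
  imports "HOL-Analysis.Analysis"
begin

definition polar_set :: "'a::real_inner set \<Rightarrow> 'a set" where
  "polar_set C = {v. \<forall>u\<in>C. v \<bullet> u \<le> 1}"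

(* Orthogonal projection onto a (closed) subspace S: the nearest point of S.
   For a subspace S of a finite-dimensional space this is the usual
   orthogonal projection P_S. *)
definition orth_proj :: "'a::euclidean_space set \<Rightarrow> 'a \<Rightarrow> 'a" where
  "orth_proj S x = closest_point S x"

end

theory Submission
  imports Defs
begin

(* The residual r = y - P y of the projection onto X C^perp is orthogonal to X C^perp,
   so X^T r is orthogonal to C^perp and hence lies in span C. Since 0 is a relative
   interior point of C, a ball of span C around 0 lies in C, and the polar inequality
   on that ball bounds eta . X^T r uniformly over eta in the polar set of C. *)

lemma closest_point_subspace_orthogonal:
  fixes S :: "'a::euclidean_space set"
  assumes "subspace S"
  shows "y - closest_point S y \<in> S\<^sup>\<bottom>"
proof -
  have cl: "closed S" and cv: "convex S"
    using assms closed_subspace subspace_imp_convex by blast+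
  have P: "closest_point S y \<in> S"
    using assms cl closest_point_in_set subspace_0 by blast
  have "(y - closest_point S y) \<bullet> s = 0" if "s \<in> S" for s
  proof -
    have "closest_point S y + s \<in> S" "closest_point S y - s \<in> S"
      using assms P that subspace_add subspace_diff by blast+
    from closest_point_dot[OF cv cl this(1), of y] closest_point_dot[OF cv cl this(2), of y]
    show ?thesis by (simp add: inner_diff_right)
  qed
  then show ?thesis
    by (simp add: orthogonal_comp_def orthogonal_def inner_commute)
qed

lemma adjoint_orthogonal_image_orthogonal_comp:
  fixes f :: "'a::euclidean_space \<Rightarrow> 'b::euclidean_space"
  assumes "linear f" and "z \<in> (f ` (C\<^sup>\<bottom>))\<^sup>\<bottom>"
  shows "adjoint f z \<in> span C"
proof -
  have "adjoint f z \<in> (span C)\<^sup>\<bottom>\<^sup>\<bottom>"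
    unfolding orthogonal_comp_def orthogonal_def
  proof clarify
    fix v assume "\<forall>u\<in>span C. u \<bullet> v = 0"
    then have "v \<in> C\<^sup>\<bottom>"
      using span_superset by (auto simp: orthogonal_comp_def orthogonal_def)
    then have "f v \<bullet> z = 0"
      using assms(2) unfolding orthogonal_comp_def orthogonal_def by blast
    then show "v \<bullet> adjoint f z = 0"
      by (simp add: adjoint_works[OF assms(1)] inner_commute)
  qed
  then show ?thesis
    by (simp add: orthogonal_comp_self subspace_span)
qed

lemma polar_set_inner_bounded_on_span:
  fixes C :: "'a::euclidean_space set"
  assumes "0 \<in> rel_interior C" and "w \<in> span C"
  shows "\<exists>M. \<forall>\<eta>\<in>polar_set C. \<eta> \<bullet> w \<le> M"
proof -
  obtain e where e: "e > 0" "cball 0 e \<inter> affine hull C \<subseteq> C"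
    using assms(1) mem_rel_interior_cball by blast
  have "0 \<in> C"
    using assms(1) rel_interior_subset by blast
  then have hull: "affine hull C = span C"
    by (simp add: affine_hull_span_0 hull_inc)
  have "\<eta> \<bullet> w \<le> norm w / e" if \<eta>: "\<eta> \<in> polar_set C" for \<eta>
  proof (cases "w = 0")
    case False
    define u where "u = (e / norm w) *\<^sub>R w"
    have "u \<in> span C" "norm u = e"
      using assms(2) False e span_mul by (auto simp: u_def)
    then have "u \<in> C"
      using e hull by auto
    then have "(e / norm w) * (\<eta> \<bullet> w) \<le> 1"
      using \<eta> by (auto simp: polar_set_def u_def)
    then show ?thesis
      using False e by (simp add: field_simps mult.commute)
  qed simp
  then show ?thesis
    by blast
qed

theorem lemma7:
  fixes C :: "(real ^ 'p) set"
    and X :: "real ^ 'p ^ 'n"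
    and y :: "real ^ 'n"
    and f :: "real ^ 'p \<Rightarrow> real"
  assumes "closed C" and "convex C" and "0 \<in> rel_interior C"
    and "f = (\<lambda>\<eta>. \<eta> \<bullet> (transpose X *v (y - orth_proj ((\<lambda>v. X *v v) ` (orthogonal_comp C)) y)))"
  shows "\<exists>M::real. \<forall>\<eta>\<in>polar_set C. f \<eta> \<le> M"
proof -
  let ?A = "\<lambda>v. X *v v"
  have lin: "linear ?A"
    by (simp add: matrix_vector_mul_linear)
  have "y - orth_proj (?A ` (C\<^sup>\<bottom>)) y \<in> (?A ` (C\<^sup>\<bottom>))\<^sup>\<bottom>"
    unfolding orth_proj_def
    by (rule closest_point_subspace_orthogonal[OF linear_subspace_image[OF lin subspace_orthogonal_comp]])
  then have "transpose X *v (y - orth_proj (?A ` (C\<^sup>\<bottom>)) y) \<in> span C"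
    using adjoint_orthogonal_image_orthogonal_comp[OF lin] by (simp add: adjoint_matrix)
  then show ?thesis
    using polar_set_inner_bounded_on_span[OF assms(3)] assms(4) by simp
qed

end
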